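(* Let $R$ be a unital associative ring and $M\in{\cal S}$. Then $M^{-1}\in{\cal S}$.
   Context: For $M\in M_3(R)$ with all entries invertible, $J_2(M)$ is the matrix with $(j,k)$-entry $(M_{kj})^{-1}$. ${\cal S}=\{M\in M_3(R):$ all square submatrices of $M$ (including $1\times1$ ones and $M$ itself) are invertible and $J_2(M)$ is invertible$\}$. *)

theory Defs
  imports Main
begin

text \<open>Square matrices of size n over a (possibly noncommutative) unital ring,
represented as functions nat => nat => 'a; only entries with indices < n matter.\<close>

definition mmult :: "nat \<Rightarrow> (nat \<Rightarrow> nat \<Rightarrow> 'a::ring_1) \<Rightarrow> (nat \<Rightarrow> nat \<Rightarrow> 'a) \<Rightarrow> nat \<Rightarrow> nat \<Rightarrow> 'a" where
  "mmult n A B = (\<lambda>i j. \<Sum>k<n. A i k * B k j)"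

definition is_identity :: "nat \<Rightarrow> (nat \<Rightarrow> nat \<Rightarrow> 'a::ring_1) \<Rightarrow> bool" where
  "is_identity n A \<longleftrightarrow> (\<forall>i<n. \<forall>j<n. A i j = (if i = j then 1 else 0))"

definition is_inverse :: "nat \<Rightarrow> (nat \<Rightarrow> nat \<Rightarrow> 'a::ring_1) \<Rightarrow> (nat \<Rightarrow> nat \<Rightarrow> 'a) \<Rightarrow> bool" where
  "is_inverse n A B \<longleftrightarrow> is_identity n (mmult n A B) \<and> is_identity n (mmult n B A)"

definition minvertible :: "nat \<Rightarrow> (nat \<Rightarrow> nat \<Rightarrow> 'a::ring_1) \<Rightarrow> bool" where
  "minvertible n A \<longleftrightarrow> (\<exists>B. is_inverse n A B)"

definition ring_inv :: "'a::ring_1 \<Rightarrow> 'a" where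
  "ring_inv x = (THE y. x * y = 1 \<and> y * x = 1)"

definition all_square_submatrices_invertible :: "(nat \<Rightarrow> nat \<Rightarrow> 'a::ring_1) \<Rightarrow> bool" where
  "all_square_submatrices_invertible M \<longleftrightarrow>
     (\<forall>k r c. 1 \<le> k \<and> k \<le> 3 \<and> strict_mono_on {..<k} r \<and> strict_mono_on {..<k} c \<and>
        r ` {..<k} \<subseteq> {..<3} \<and> c ` {..<k} \<subseteq> {..<3}
        \<longrightarrow> minvertible k (\<lambda>i j. M (r i) (c j)))"

definition J2 :: "(nat \<Rightarrow> nat \<Rightarrow> 'a::ring_1) \<Rightarrow> nat \<Rightarrow> nat \<Rightarrow> 'a" where
  "J2 M = (\<lambda>j k. ring_inv (M k j))"

definition inS :: "(nat \<Rightarrow> nat \<Rightarrow> 'a::ring_1) \<Rightarrow> bool" where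
  "inS M \<longleftrightarrow> all_square_submatrices_invertible M \<and> minvertible 3 (J2 M)"

end

theory Submission
  imports Defs
begin

text \<open>Everything is Gaussian elimination at a unit pivot, which works over any ring. Pivoting
  M at an entry m, the 2 x 2 block of N = M^-1 complementary to m is the inverse of the Schur
  complement of m; dually, an invertible 2 x 2 block of M makes the complementary entry of N a
  unit (Jacobi). So all square submatrices of N are invertible. Pivoting J_2(M) at its unit entry
  M_33^-1, its Schur complement is - D Q D' with D, D' diagonal with unit entries and
  Q_ij = M_33 - M_3i M_ji^-1 M_j3 the 2 x 2 quasideterminants of M; hence J_2(M) is invertible iff
  the Schur complement of Q at Q_22 is a unit. The quasideterminants of N are the inverses of those
  of M reflected in the antidiagonal, which turns this Schur complement for N into the one for M
  multiplied by units on both sides.\<close>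

definition ring_unit :: "'a::ring_1 \<Rightarrow> bool" where
  "ring_unit x \<longleftrightarrow> (\<exists>y. x * y = 1 \<and> y * x = 1)"

lemma ring_unitI: "x * y = 1 \<Longrightarrow> y * x = 1 \<Longrightarrow> ring_unit (x::'a::ring_1)"
  unfolding ring_unit_def by blast

lemma ring_inv_unique:
  fixes x y :: "'a::ring_1"
  assumes "x * y = 1" "y * x = 1"
  shows "ring_inv x = y"
  unfolding ring_inv_def
proof (rule the_equality)
  show "x * y = 1 \<and> y * x = 1" using assms by simp
  fix z assume z: "x * z = 1 \<and> z * x = 1"
  have "z = (y * x) * z" using assms by simp
  also have "\<dots> = y * (x * z)" by (simp add: mult.assoc)
  finally show "z = y" using z by simp
qed

lemma ring_unit_inverse:
  fixes x y :: "'a::ring_1"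
  assumes "ring_unit x"
  shows "x * ring_inv x = 1" "ring_inv x * x = 1"
    and "x * (ring_inv x * y) = y" "ring_inv x * (x * y) = y"
proof -
  obtain z where z: "x * z = 1" "z * x = 1" using assms unfolding ring_unit_def by blast
  then have "ring_inv x = z" by (rule ring_inv_unique)
  with z show "x * ring_inv x = 1" "ring_inv x * x = 1" by simp_all
  then show "x * (ring_inv x * y) = y" "ring_inv x * (x * y) = y"
    by (simp_all flip: mult.assoc)
qed

lemma ring_unit_ring_inv: "ring_unit x \<Longrightarrow> ring_unit (ring_inv (x::'a::ring_1))"
  by (rule ring_unitI[of _ x]) (simp_all add: ring_unit_inverse)

lemma ring_inv_ring_inv: "ring_unit x \<Longrightarrow> ring_inv (ring_inv x) = (x::'a::ring_1)"
  by (rule ring_inv_unique) (simp_all add: ring_unit_inverse)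

lemma ring_unit_mult:
  fixes x y :: "'a::ring_1"
  assumes "ring_unit x" "ring_unit y"
  shows "ring_unit (x * y)"
  by (rule ring_unitI[of _ "ring_inv y * ring_inv x"])
    (simp_all add: mult.assoc ring_unit_inverse assms)

lemma ring_unit_minus_iff: "ring_unit (- x) \<longleftrightarrow> ring_unit (x::'a::ring_1)"
  unfolding ring_unit_def by (metis minus_minus minus_mult_minus)

lemma ring_unit_sandwich_iff:
  fixes a x b :: "'a::ring_1"
  assumes "ring_unit a" "ring_unit b"
  shows "ring_unit (a * x * b) \<longleftrightarrow> ring_unit x"
proof
  assume "ring_unit (a * x * b)"
  then have "ring_unit (ring_inv a * (a * x * b) * ring_inv b)"
    using assms by (metis ring_unit_mult ring_unit_ring_inv)
  moreover have "ring_inv a * (a * x * b) * ring_inv b = x"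
    by (simp add: mult.assoc ring_unit_inverse assms)
  ultimately show "ring_unit x" by (simp only:)
qed (intro ring_unit_mult assms)

lemma ring_inv_minus_mult3:
  fixes a x b :: "'a::ring_1"
  assumes "ring_unit a" "ring_unit x" "ring_unit b"
  shows "ring_inv (- (a * x * b)) = - (ring_inv b * ring_inv x * ring_inv a)"
  by (rule ring_inv_unique) (simp_all add: mult.assoc ring_unit_inverse assms)

lemma sum_lessThan_2: "(\<Sum>k<2. f k) = f 0 + f (1::nat)"
  by (simp add: eval_nat_numeral)

lemma sum_lessThan_3: "(\<Sum>k<3. f k) = f 0 + f 1 + f (2::nat)"
  by (simp add: eval_nat_numeral)

lemma all_less_2_iff: "(\<forall>i<2. P i) \<longleftrightarrow> P 0 \<and> P (1::nat)"
  by (auto simp: less_Suc_eq eval_nat_numeral)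

lemma all_less_3_iff: "(\<forall>i<3. P i) \<longleftrightarrow> P 0 \<and> P 1 \<and> P (2::nat)"
  by (auto simp: less_Suc_eq eval_nat_numeral)

definition perm3 :: "nat \<Rightarrow> nat \<Rightarrow> nat \<Rightarrow> bool" where
  "perm3 a b c \<longleftrightarrow> distinct [a, b, c] \<and> a < 3 \<and> b < 3 \<and> c < 3"

lemma sum_perm3: "perm3 a b c \<Longrightarrow> (\<Sum>k<3. f k) = f a + f b + f c"
  unfolding perm3_def sum_lessThan_3
  by (auto simp: less_Suc_eq eval_nat_numeral add_ac)

lemma perm3_complement: "a < b \<Longrightarrow> b < 3 \<Longrightarrow> perm3 (3 - a - b) a b"
  unfolding perm3_def by (auto simp: less_Suc_eq eval_nat_numeral)

lemma perm3_exists: "x < 3 \<Longrightarrow> \<exists>a b. a < b \<and> b < 3 \<and> perm3 x a b"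
  unfolding perm3_def by (auto simp: less_Suc_eq eval_nat_numeral)

definition inverse2 :: "'a::ring_1 \<Rightarrow> 'a \<Rightarrow> 'a \<Rightarrow> 'a \<Rightarrow> 'a \<Rightarrow> 'a \<Rightarrow> 'a \<Rightarrow> 'a \<Rightarrow> bool" where
  "inverse2 a b c d e f g h \<longleftrightarrow>
     a*e + b*g = 1 \<and> a*f + b*h = 0 \<and> c*e + d*g = 0 \<and> c*f + d*h = 1 \<and>
     e*a + f*c = 1 \<and> e*b + f*d = 0 \<and> g*a + h*c = 0 \<and> g*b + h*d = 1"

lemma inverse2_sym: "inverse2 a b c d e f g h \<Longrightarrow> inverse2 e f g h a b c d"
  unfolding inverse2_def by auto

lemma inverse2_swap: "inverse2 a b c d e f g h \<Longrightarrow> inverse2 d c b a h g f e"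
  unfolding inverse2_def by (auto simp: add.commute)

lemma minvertible_1_iff: "minvertible 1 X \<longleftrightarrow> ring_unit (X 0 0)"
proof
  assume "minvertible 1 X"
  then obtain B where "is_inverse 1 X B" unfolding minvertible_def by blast
  then show "ring_unit (X 0 0)"
    unfolding is_inverse_def is_identity_def mmult_def by (auto intro: ring_unitI)
next
  assume "ring_unit (X 0 0)"
  then obtain y where "X 0 0 * y = 1" "y * X 0 0 = 1" unfolding ring_unit_def by blast
  then have "is_inverse 1 X (\<lambda>_ _. y)"
    unfolding is_inverse_def is_identity_def mmult_def by simp
  then show "minvertible 1 X" unfolding minvertible_def by blast
qed

lemma minvertible_2_iff:
  "minvertible 2 X \<longleftrightarrow> (\<exists>e f g h. inverse2 (X 0 0) (X 0 1) (X 1 0) (X 1 1) e f g h)"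
proof
  assume "minvertible 2 X"
  then obtain B where "is_inverse 2 X B" unfolding minvertible_def by blast
  then have "inverse2 (X 0 0) (X 0 1) (X 1 0) (X 1 1) (B 0 0) (B 0 1) (B 1 0) (B 1 1)"
    unfolding is_inverse_def is_identity_def mmult_def inverse2_def
    by (simp add: all_less_2_iff sum_lessThan_2)
  then show "\<exists>e f g h. inverse2 (X 0 0) (X 0 1) (X 1 0) (X 1 1) e f g h" by blast
next
  assume "\<exists>e f g h. inverse2 (X 0 0) (X 0 1) (X 1 0) (X 1 1) e f g h"
  then obtain e f g h where "inverse2 (X 0 0) (X 0 1) (X 1 0) (X 1 1) e f g h" by blast
  then have "is_inverse 2 X (\<lambda>i j. if i = 0 then (if j = 0 then e else f) else (if j = 0 then g else h))"
    unfolding is_inverse_def is_identity_def mmult_def inverse2_def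
    by (simp add: all_less_2_iff sum_lessThan_2)
  then show "minvertible 2 X" unfolding minvertible_def by blast
qed

lemma minvertible_cong:
  assumes "\<And>i j. i < n \<Longrightarrow> j < n \<Longrightarrow> A i j = A' i j"
  shows "minvertible n A \<longleftrightarrow> minvertible n A'"
proof -
  have "mmult n A B i j = mmult n A' B i j \<and> mmult n B A i j = mmult n B A' i j"
    if "i < n" "j < n" for B i j
    unfolding mmult_def using assms that by (auto intro!: sum.cong)
  then show ?thesis unfolding minvertible_def is_inverse_def is_identity_def by auto
qed

lemma eliminate_left:
  fixes m m' n x c y d :: "'a::ring_1"
  assumes "m' * m = 1" "m * n + x = 0" "c * n + y = d"
  shows "y - c * m' * x = d"
proof -
  have "m' * (m * n + x) = 0" using assms(2) by simp
  then have "n = - (m' * x)"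
    using assms(1) by (simp add: distrib_left eq_neg_iff_add_eq_0 flip: mult.assoc)
  then show ?thesis using assms(3) by (simp add: mult.assoc)
qed

lemma eliminate_right:
  fixes m m' n x c y d :: "'a::ring_1"
  assumes "m * m' = 1" "n * m + x = 0" "n * c + y = d"
  shows "y - x * m' * c = d"
proof -
  have "(n * m + x) * m' = 0" using assms(2) by simp
  then have "n = - (x * m')"
    using assms(1) by (simp add: distrib_right eq_neg_iff_add_eq_0 mult.assoc)
  then show ?thesis using assms(3) by (simp add: mult.assoc)
qed

lemma inverse2_schur:
  fixes p r s t e f g h :: "'a::ring_1"
  assumes inv: "inverse2 p r s t e f g h" and p: "ring_unit p"
  shows "(t - s * ring_inv p * r) * h = 1" "h * (t - s * ring_inv p * r) = 1"
proof -
  have eqs: "p*f + r*h = 0" "s*f + t*h = 1" "g*p + h*s = 0" "g*r + h*t = 1"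
    using inv unfolding inverse2_def by auto
  have "t*h - s * ring_inv p * (r*h) = 1"
    by (rule eliminate_left[OF ring_unit_inverse(2)[OF p] eqs(1,2)])
  then show "(t - s * ring_inv p * r) * h = 1" by (simp add: algebra_simps)
  have "h*t - h*s * ring_inv p * r = 1"
    by (rule eliminate_right[OF ring_unit_inverse(1)[OF p] eqs(3,4)])
  then show "h * (t - s * ring_inv p * r) = 1" by (simp add: algebra_simps)
qed

lemma inverse2_of_schur:
  fixes p r s t :: "'a::ring_1"
  assumes p: "ring_unit p" and schur: "ring_unit (t - s * ring_inv p * r)"
  shows "\<exists>e f g h. inverse2 p r s t e f g h"
proof -
  define ip where "ip = ring_inv p"
  define \<sigma> where "\<sigma> = t - s * ip * r"
  define i\<sigma> where "i\<sigma> = ring_inv \<sigma>"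
  have U: "\<And>y. p * (ip * y) = y" "p * ip = 1" "ip * p = 1"
    "\<And>y. \<sigma> * (i\<sigma> * y) = y" "\<sigma> * i\<sigma> = 1" "i\<sigma> * \<sigma> = 1"
    using ring_unit_inverse[OF p] ring_unit_inverse[OF schur] unfolding ip_def i\<sigma>_def \<sigma>_def
    by auto
  have "inverse2 p r s t (ip + ip*r*i\<sigma>*s*ip) (-(ip*r*i\<sigma>)) (-(i\<sigma>*s*ip)) i\<sigma>"
    unfolding inverse2_def
  proof (intro conjI)
    show "p * (ip + ip*r*i\<sigma>*s*ip) + r * - (i\<sigma>*s*ip) = 1"
      by (simp add: algebra_simps U)
    show "p * - (ip*r*i\<sigma>) + r * i\<sigma> = 0"
      by (simp add: algebra_simps U)
    have "s * (ip + ip*r*i\<sigma>*s*ip) + t * - (i\<sigma>*s*ip) = s*ip - \<sigma> * (i\<sigma> * (s*ip))"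
      by (simp add: \<sigma>_def algebra_simps)
    then show "s * (ip + ip*r*i\<sigma>*s*ip) + t * - (i\<sigma>*s*ip) = 0" using U by simp
    have "s * - (ip*r*i\<sigma>) + t * i\<sigma> = \<sigma> * i\<sigma>"
      by (simp add: \<sigma>_def algebra_simps)
    then show "s * - (ip*r*i\<sigma>) + t * i\<sigma> = 1" using U by simp
    show "(ip + ip*r*i\<sigma>*s*ip) * p + - (ip*r*i\<sigma>) * s = 1"
      by (simp add: algebra_simps U mult.assoc)
    have "(ip + ip*r*i\<sigma>*s*ip) * r + - (ip*r*i\<sigma>) * t = ip*r - ip*r*(i\<sigma>*\<sigma>)"
      by (simp add: \<sigma>_def algebra_simps)
    then show "(ip + ip*r*i\<sigma>*s*ip) * r + - (ip*r*i\<sigma>) * t = 0" using U by simp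
    show "- (i\<sigma>*s*ip) * p + i\<sigma> * s = 0"
      by (simp add: algebra_simps U mult.assoc)
    have "- (i\<sigma>*s*ip) * r + i\<sigma> * t = i\<sigma> * \<sigma>"
      by (simp add: \<sigma>_def algebra_simps)
    then show "- (i\<sigma>*s*ip) * r + i\<sigma> * t = 1" using U by simp
  qed
  then show ?thesis by blast
qed

lemma inverse2_iff_schur:
  fixes p r s t :: "'a::ring_1"
  assumes "ring_unit p"
  shows "(\<exists>e f g h. inverse2 p r s t e f g h) \<longleftrightarrow> ring_unit (t - s * ring_inv p * r)"
proof
  assume "\<exists>e f g h. inverse2 p r s t e f g h"
  then obtain e f g h where "inverse2 p r s t e f g h" by blast
  from inverse2_schur[OF this assms] show "ring_unit (t - s * ring_inv p * r)"
    by (rule ring_unitI)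
qed (rule inverse2_of_schur[OF assms])

lemma is_inverse_sym: "is_inverse n M N \<Longrightarrow> is_inverse n N M"
  unfolding is_inverse_def by simp

lemma is_inverse_3_entry:
  fixes M N :: "nat \<Rightarrow> nat \<Rightarrow> 'a::ring_1"
  assumes "is_inverse 3 M N" "perm3 k0 k1 k2" "i < 3" "j < 3"
  shows "M i k0 * N k0 j + M i k1 * N k1 j + M i k2 * N k2 j = (if i = j then 1 else 0)"
  using assms sum_perm3[OF assms(2), of "\<lambda>k. M i k * N k j"]
  unfolding is_inverse_def is_identity_def mmult_def by simp

definition schur :: "(nat \<Rightarrow> nat \<Rightarrow> 'a::ring_1) \<Rightarrow> nat \<Rightarrow> nat \<Rightarrow> nat \<Rightarrow> nat \<Rightarrow> 'a" where
  "schur M p q i j = M i j - M i q * ring_inv (M p q) * M p j"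

text \<open>Block inverse: for G = [[A, b], [c, g]] with g = G 2 2 a unit and S = A - b g^-1 c, the
  inverse of G is [[S^-1, - S^-1 b g^-1], [- g^-1 c S^-1, g^-1 + g^-1 c S^-1 b g^-1]];
  here X plays the role of S^-1.\<close>
definition schur_inverse3 :: "(nat \<Rightarrow> nat \<Rightarrow> 'a::ring_1) \<Rightarrow> (nat \<Rightarrow> nat \<Rightarrow> 'a) \<Rightarrow> nat \<Rightarrow> nat \<Rightarrow> 'a" where
  "schur_inverse3 G X i j = (let gi = ring_inv (G 2 2) in
     if i < 2 \<and> j < 2 then X i j
     else if i < 2 then - ((X i 0 * G 0 2 + X i 1 * G 1 2) * gi)
     else if j < 2 then - (gi * (G 2 0 * X 0 j + G 2 1 * X 1 j))
     else gi + gi * (G 2 0 * (X 0 0 * G 0 2 + X 0 1 * G 1 2)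
                   + G 2 1 * (X 1 0 * G 0 2 + X 1 1 * G 1 2)) * gi)"

lemma schur_inverse3_right:
  fixes G X :: "nat \<Rightarrow> nat \<Rightarrow> 'a::ring_1"
  assumes g: "ring_unit (G 2 2)" and X: "is_inverse 2 (schur G 2 2) X"
  shows "is_identity 3 (mmult 3 G (schur_inverse3 G X))"
proof -
  define gi where "gi = ring_inv (G 2 2)"
  define B where "B = schur_inverse3 G X"
  note B_simps = B_def schur_inverse3_def Let_def gi_def[symmetric]
  have U: "\<And>y. G 2 2 * (gi * y) = y" "G 2 2 * gi = 1"
    unfolding gi_def using ring_unit_inverse[OF g] by auto
  have SX: "schur G 2 2 i 0 * X 0 j + schur G 2 2 i 1 * X 1 j = (if i = j then 1 else 0)"
    if "i < 2" "j < 2" for i j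
    using X that unfolding is_inverse_def is_identity_def mmult_def by (simp add: sum_lessThan_2)
  have top: "(\<Sum>k<3. G i k * B k j) = schur G 2 2 i 0 * X 0 j + schur G 2 2 i 1 * X 1 j"
    if "i < 2" "j < 2" for i j
    using that by (simp add: B_simps sum_lessThan_3 schur_def algebra_simps)
  have right: "(\<Sum>k<3. G i k * B k 2) = G i 2 * gi
      - (schur G 2 2 i 0 * X 0 0 + schur G 2 2 i 1 * X 1 0) * G 0 2 * gi
      - (schur G 2 2 i 0 * X 0 1 + schur G 2 2 i 1 * X 1 1) * G 1 2 * gi" for i
    by (simp add: B_simps sum_lessThan_3 schur_def algebra_simps)
  have bottom: "(\<Sum>k<3. G 2 k * B k j) = 0" if "j < 2" for j
    using that by (simp add: B_simps sum_lessThan_3 algebra_simps U)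
  have corner: "(\<Sum>k<3. G 2 k * B k 2) = 1"
    by (simp add: B_simps sum_lessThan_3 algebra_simps U)
  show ?thesis
    unfolding is_identity_def mmult_def B_def[symmetric] all_less_3_iff
    using top[of 0 0] top[of 0 1] top[of 1 0] top[of 1 1] right[of 0] right[of 1]
      bottom[of 0] bottom[of 1] corner
      SX[of 0 0] SX[of 0 1] SX[of 1 0] SX[of 1 1]
    by simp
qed

lemma schur_inverse3_left:
  fixes G X :: "nat \<Rightarrow> nat \<Rightarrow> 'a::ring_1"
  assumes g: "ring_unit (G 2 2)" and X: "is_inverse 2 (schur G 2 2) X"
  shows "is_identity 3 (mmult 3 (schur_inverse3 G X) G)"
proof -
  define gi where "gi = ring_inv (G 2 2)"
  define B where "B = schur_inverse3 G X"
  note B_simps = B_def schur_inverse3_def Let_def gi_def[symmetric]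
  have U: "\<And>y. gi * (G 2 2 * y) = y" "gi * G 2 2 = 1"
    unfolding gi_def using ring_unit_inverse[OF g] by auto
  have XS: "X i 0 * schur G 2 2 0 j + X i 1 * schur G 2 2 1 j = (if i = j then 1 else 0)"
    if "i < 2" "j < 2" for i j
    using X that unfolding is_inverse_def is_identity_def mmult_def by (simp add: sum_lessThan_2)
  have left: "(\<Sum>k<3. B i k * G k j) = X i 0 * schur G 2 2 0 j + X i 1 * schur G 2 2 1 j"
    if "i < 2" "j < 2" for i j
    using that by (simp add: B_simps sum_lessThan_3 schur_def algebra_simps)
  have right: "(\<Sum>k<3. B i k * G k 2) = 0" if "i < 2" for i
    using that by (simp add: B_simps sum_lessThan_3 algebra_simps U)
  have bottom: "(\<Sum>k<3. B 2 k * G k j) = gi * G 2 j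
      - gi * G 2 0 * (X 0 0 * schur G 2 2 0 j + X 0 1 * schur G 2 2 1 j)
      - gi * G 2 1 * (X 1 0 * schur G 2 2 0 j + X 1 1 * schur G 2 2 1 j)" for j
    by (simp add: B_simps sum_lessThan_3 schur_def algebra_simps)
  have corner: "(\<Sum>k<3. B 2 k * G k 2) = 1"
    by (simp add: B_simps sum_lessThan_3 algebra_simps U)
  show ?thesis
    unfolding is_identity_def mmult_def B_def[symmetric] all_less_3_iff
    using left[of 0 0] left[of 0 1] left[of 1 0] left[of 1 1] right[of 0] right[of 1]
      bottom[of 0] bottom[of 1] corner XS[of 0 0] XS[of 0 1] XS[of 1 0] XS[of 1 1]
    by simp
qed

lemma minvertible_3_of_schur:
  fixes G :: "nat \<Rightarrow> nat \<Rightarrow> 'a::ring_1"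
  assumes "ring_unit (G 2 2)" "minvertible 2 (schur G 2 2)"
  shows "minvertible 3 G"
proof -
  obtain X where X: "is_inverse 2 (schur G 2 2) X"
    using assms(2) unfolding minvertible_def by blast
  have "is_inverse 3 G (schur_inverse3 G X)"
    unfolding is_inverse_def
    using schur_inverse3_right[OF assms(1) X] schur_inverse3_left[OF assms(1) X] by blast
  then show ?thesis unfolding minvertible_def by blast
qed

lemma schur_mult_inverse_block:
  fixes M N :: "nat \<Rightarrow> nat \<Rightarrow> 'a::ring_1"
  assumes P: "perm3 p0 p1 p2" and Q: "perm3 q0 q1 q2" and inv: "is_inverse 3 M N"
    and u: "ring_unit (M p0 q0)" and i: "i \<in> {p1, p2}" and j: "j \<in> {p1, p2}"
  shows "schur M p0 q0 i q1 * N q1 j + schur M p0 q0 i q2 * N q2 j = (if i = j then 1 else 0)"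
proof -
  have lt: "p0 < 3" "i < 3" "j < 3" "p0 \<noteq> j" using P i j unfolding perm3_def by auto
  have "M p0 q0 * N q0 j + (M p0 q1 * N q1 j + M p0 q2 * N q2 j) = 0"
    using is_inverse_3_entry[OF inv Q, of p0 j] lt by (simp add: add.assoc)
  moreover have "M i q0 * N q0 j + (M i q1 * N q1 j + M i q2 * N q2 j) = (if i = j then 1 else 0)"
    using is_inverse_3_entry[OF inv Q, of i j] lt by (simp add: add.assoc)
  ultimately have "(M i q1 * N q1 j + M i q2 * N q2 j)
      - M i q0 * ring_inv (M p0 q0) * (M p0 q1 * N q1 j + M p0 q2 * N q2 j) = (if i = j then 1 else 0)"
    by (rule eliminate_left[OF ring_unit_inverse(2)[OF u]])
  then show ?thesis by (simp add: schur_def algebra_simps)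
qed

lemma inverse_block_mult_schur:
  fixes M N :: "nat \<Rightarrow> nat \<Rightarrow> 'a::ring_1"
  assumes P: "perm3 p0 p1 p2" and Q: "perm3 q0 q1 q2" and inv: "is_inverse 3 M N"
    and u: "ring_unit (M p0 q0)" and i: "i \<in> {q1, q2}" and j: "j \<in> {q1, q2}"
  shows "N i p1 * schur M p0 q0 p1 j + N i p2 * schur M p0 q0 p2 j = (if i = j then 1 else 0)"
proof -
  have lt: "q0 < 3" "i < 3" "j < 3" "i \<noteq> q0" using Q i j unfolding perm3_def by auto
  note inv' = is_inverse_sym[OF inv]
  have "N i p0 * M p0 q0 + (N i p1 * M p1 q0 + N i p2 * M p2 q0) = 0"
    using is_inverse_3_entry[OF inv' P, of i q0] lt by (simp add: add.assoc)
  moreover have "N i p0 * M p0 j + (N i p1 * M p1 j + N i p2 * M p2 j) = (if i = j then 1 else 0)"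
    using is_inverse_3_entry[OF inv' P, of i j] lt by (simp add: add.assoc)
  ultimately have "(N i p1 * M p1 j + N i p2 * M p2 j)
      - (N i p1 * M p1 q0 + N i p2 * M p2 q0) * ring_inv (M p0 q0) * M p0 j = (if i = j then 1 else 0)"
    by (rule eliminate_right[OF ring_unit_inverse(1)[OF u]])
  then show ?thesis by (simp add: schur_def algebra_simps)
qed

lemma inverse2_inverse_block:
  fixes M N :: "nat \<Rightarrow> nat \<Rightarrow> 'a::ring_1"
  assumes P: "perm3 p0 p1 p2" and Q: "perm3 q0 q1 q2" and inv: "is_inverse 3 M N"
    and u: "ring_unit (M p0 q0)"
  shows "inverse2 (N q1 p1) (N q1 p2) (N q2 p1) (N q2 p2)
    (schur M p0 q0 p1 q1) (schur M p0 q0 p1 q2) (schur M p0 q0 p2 q1) (schur M p0 q0 p2 q2)"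
proof -
  have "p1 \<noteq> p2" "q1 \<noteq> q2" using P Q unfolding perm3_def by auto
  with schur_mult_inverse_block[OF P Q inv u] inverse_block_mult_schur[OF P Q inv u]
  show ?thesis unfolding inverse2_def by auto
qed

lemma minvertible_3_iff_schur:
  fixes G :: "nat \<Rightarrow> nat \<Rightarrow> 'a::ring_1"
  assumes "ring_unit (G 2 2)"
  shows "minvertible 3 G \<longleftrightarrow> minvertible 2 (schur G 2 2)"
proof
  assume "minvertible 3 G"
  then obtain H where "is_inverse 3 G H" unfolding minvertible_def by blast
  moreover have "perm3 2 0 1" unfolding perm3_def by simp
  ultimately have "inverse2 (H 0 0) (H 0 1) (H 1 0) (H 1 1)
      (schur G 2 2 0 0) (schur G 2 2 0 1) (schur G 2 2 1 0) (schur G 2 2 1 1)"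
    using inverse2_inverse_block assms by blast
  then show "minvertible 2 (schur G 2 2)"
    unfolding minvertible_2_iff by (blast dest: inverse2_sym)
qed (rule minvertible_3_of_schur[where G = G, OF assms])

lemma block_eliminate_left:
  fixes a b c d e f g h c1 c2 b1 b2 m n0 n1 n2 :: "'a::ring_1"
  assumes E: "e*a + f*c = 1" "e*b + f*d = 0" "g*a + h*c = 0" "g*b + h*d = 1"
    and r1: "c1*n0 + a*n1 + b*n2 = 0" and r2: "c2*n0 + c*n1 + d*n2 = 0"
    and r0: "m*n0 + b1*n1 + b2*n2 = 1"
  shows "(m - b1*(e*c1 + f*c2) - b2*(g*c1 + h*c2)) * n0 = 1"
proof -
  have "e*(c1*n0 + a*n1 + b*n2) + f*(c2*n0 + c*n1 + d*n2)
      = (e*c1 + f*c2)*n0 + (e*a + f*c)*n1 + (e*b + f*d)*n2" by (simp add: algebra_simps)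
  then have n1: "n1 = - ((e*c1 + f*c2)*n0)"
    using E r1 r2 by (simp add: eq_neg_iff_add_eq_0 add.commute)
  have "g*(c1*n0 + a*n1 + b*n2) + h*(c2*n0 + c*n1 + d*n2)
      = (g*c1 + h*c2)*n0 + (g*a + h*c)*n1 + (g*b + h*d)*n2" by (simp add: algebra_simps)
  then have n2: "n2 = - ((g*c1 + h*c2)*n0)"
    using E r1 r2 by (simp add: eq_neg_iff_add_eq_0 add.commute)
  have "(m - b1*(e*c1 + f*c2) - b2*(g*c1 + h*c2)) * n0
      = m*n0 + b1*(- ((e*c1 + f*c2)*n0)) + b2*(- ((g*c1 + h*c2)*n0))" by (simp add: algebra_simps)
  also have "\<dots> = 1" using r0 n1 n2 by simp
  finally show ?thesis .
qed

lemma block_eliminate_right: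
  fixes a b c d e f g h c1 c2 b1 b2 m n0 s1 s2 :: "'a::ring_1"
  assumes E: "a*e + b*g = 1" "a*f + b*h = 0" "c*e + d*g = 0" "c*f + d*h = 1"
    and r1: "n0*b1 + s1*a + s2*c = 0" and r2: "n0*b2 + s1*b + s2*d = 0"
    and r0: "n0*m + s1*c1 + s2*c2 = 1"
  shows "n0 * (m - b1*(e*c1 + f*c2) - b2*(g*c1 + h*c2)) = 1"
proof -
  have "(n0*b1 + s1*a + s2*c)*e + (n0*b2 + s1*b + s2*d)*g
      = n0*(b1*e + b2*g) + s1*(a*e + b*g) + s2*(c*e + d*g)" by (simp add: algebra_simps)
  then have s1: "s1 = - (n0*(b1*e + b2*g))"
    using E r1 r2 by (simp add: eq_neg_iff_add_eq_0 add.commute)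
  have "(n0*b1 + s1*a + s2*c)*f + (n0*b2 + s1*b + s2*d)*h
      = n0*(b1*f + b2*h) + s1*(a*f + b*h) + s2*(c*f + d*h)" by (simp add: algebra_simps)
  then have s2: "s2 = - (n0*(b1*f + b2*h))"
    using E r1 r2 by (simp add: eq_neg_iff_add_eq_0 add.commute)
  have "n0 * (m - b1*(e*c1 + f*c2) - b2*(g*c1 + h*c2))
      = n0*m + (- (n0*(b1*e + b2*g)))*c1 + (- (n0*(b1*f + b2*h)))*c2" by (simp add: algebra_simps)
  also have "\<dots> = 1" using r0 s1 s2 by simp
  finally show ?thesis .
qed

text \<open>Jacobi's complementary minor theorem for 2 x 2 blocks.\<close>
lemma ring_unit_inverse_entry:
  fixes M N :: "nat \<Rightarrow> nat \<Rightarrow> 'a::ring_1"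
  assumes P: "perm3 p0 p1 p2" and Q: "perm3 q0 q1 q2" and inv: "is_inverse 3 M N"
    and A: "inverse2 (M p1 q1) (M p1 q2) (M p2 q1) (M p2 q2) e f g h"
  shows "ring_unit (N q0 p0)"
proof -
  have lt: "p0 < 3" "p1 < 3" "p2 < 3" "q0 < 3" "q1 < 3" "q2 < 3"
    "p1 \<noteq> p0" "p2 \<noteq> p0" "q0 \<noteq> q1" "q0 \<noteq> q2" using P Q unfolding perm3_def by auto
  note MN = is_inverse_3_entry[OF inv Q] and NM = is_inverse_3_entry[OF is_inverse_sym[OF inv] P]
  note E = A[unfolded inverse2_def]
  have "(M p0 q0 - M p0 q1*(e*M p1 q0 + f*M p2 q0) - M p0 q2*(g*M p1 q0 + h*M p2 q0)) * N q0 p0 = 1"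
    by (rule block_eliminate_left) (use E MN[of p1 p0] MN[of p2 p0] MN[of p0 p0] lt in simp_all)
  moreover have "N q0 p0 * (M p0 q0 - M p0 q1*(e*M p1 q0 + f*M p2 q0) - M p0 q2*(g*M p1 q0 + h*M p2 q0)) = 1"
    by (rule block_eliminate_right) (use E NM[of q0 q1] NM[of q0 q2] NM[of q0 q0] lt in simp_all)
  ultimately show ?thesis by (blast intro: ring_unitI)
qed

lemma all_square_submatrices_invertible_unit:
  fixes M :: "nat \<Rightarrow> nat \<Rightarrow> 'a::ring_1"
  assumes "all_square_submatrices_invertible M" "i < 3" "j < 3"
  shows "ring_unit (M i j)"
proof -
  have "strict_mono_on {..<1} (\<lambda>_::nat. x)" for x :: nat unfolding strict_mono_on_def by auto
  with assms have "minvertible 1 (\<lambda>a b. M ((\<lambda>_. i) a) ((\<lambda>_. j) b))"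
    unfolding all_square_submatrices_invertible_def by (simp add: image_subset_iff)
  then show ?thesis by (simp only: minvertible_1_iff)
qed

lemma all_square_submatrices_invertible_inverse2:
  fixes M :: "nat \<Rightarrow> nat \<Rightarrow> 'a::ring_1"
  assumes "all_square_submatrices_invertible M" "r0 < r1" "r1 < 3" "c0 < c1" "c1 < 3"
  shows "\<exists>e f g h. inverse2 (M r0 c0) (M r0 c1) (M r1 c0) (M r1 c1) e f g h"
proof -
  define r where "r = (\<lambda>a::nat. if a = 0 then r0 else r1)"
  define c where "c = (\<lambda>a::nat. if a = 0 then c0 else c1)"
  have "strict_mono_on {..<2} r" "strict_mono_on {..<2} c"
    "r ` {..<2} \<subseteq> {..<3}" "c ` {..<2} \<subseteq> {..<3}"
    using assms(2-5) unfolding r_def c_def strict_mono_on_def by (auto simp: less_Suc_eq eval_nat_numeral)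
  then have "minvertible 2 (\<lambda>a b. M (r a) (c b))"
    using assms(1) unfolding all_square_submatrices_invertible_def by simp
  then show ?thesis unfolding minvertible_2_iff r_def c_def by simp
qed

lemma all_square_submatrices_invertibleI:
  fixes N :: "nat \<Rightarrow> nat \<Rightarrow> 'a::ring_1"
  assumes N1: "\<And>i j. i < 3 \<Longrightarrow> j < 3 \<Longrightarrow> ring_unit (N i j)"
    and N2: "\<And>r0 r1 c0 c1. r0 < r1 \<Longrightarrow> r1 < 3 \<Longrightarrow> c0 < c1 \<Longrightarrow> c1 < 3 \<Longrightarrow>
               \<exists>e f g h. inverse2 (N r0 c0) (N r0 c1) (N r1 c0) (N r1 c1) e f g h"
    and N3: "minvertible 3 N"
  shows "all_square_submatrices_invertible N"
  unfolding all_square_submatrices_invertible_def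
proof (intro allI impI, elim conjE)
  fix k :: nat and r c :: "nat \<Rightarrow> nat"
  assume k: "1 \<le> k" "k \<le> 3" and mono: "strict_mono_on {..<k} r" "strict_mono_on {..<k} c"
    and range: "r ` {..<k} \<subseteq> {..<3}" "c ` {..<k} \<subseteq> {..<3}"
  have sr: "r x < r y" "c x < c y" if "x < y" "y < k" for x y
    using mono that unfolding strict_mono_on_def by auto
  have ir: "r x < 3" "c x < 3" if "x < k" for x using range that by auto
  consider "k = 1" | "k = 2" | "k = 3" using k by linarith
  then show "minvertible k (\<lambda>i j. N (r i) (c j))"
  proof cases
    case 1
    then show ?thesis unfolding 1 minvertible_1_iff using N1 ir[of 0] 1 by simp
  next
    case 2
    then show ?thesis using N2 sr[of 0 1] ir[of 1] by (simp add: minvertible_2_iff)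
  next
    case 3
    then have "r 0 = 0" "r 1 = 1" "r 2 = 2" "c 0 = 0" "c 1 = 1" "c 2 = 2"
      using sr[of 0 1] sr[of 1 2] ir[of 2] by linarith+
    then have "N (r i) (c j) = N i j" if "i < 3" "j < 3" for i j
      using that by (auto simp: less_Suc_eq eval_nat_numeral)
    with 3 N3 show ?thesis using minvertible_cong[of 3 "\<lambda>i j. N (r i) (c j)" N] by simp
  qed
qed

lemma all_square_submatrices_invertible_inverse:
  fixes M N :: "nat \<Rightarrow> nat \<Rightarrow> 'a::ring_1"
  assumes AS: "all_square_submatrices_invertible M" and inv: "is_inverse 3 M N"
  shows "all_square_submatrices_invertible N"
proof (rule all_square_submatrices_invertibleI)
  fix i j :: nat assume "i < 3" "j < 3"
  obtain p1 p2 where p: "p1 < p2" "p2 < 3" "perm3 j p1 p2" using perm3_exists[OF \<open>j < 3\<close>] by blast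
  obtain q1 q2 where q: "q1 < q2" "q2 < 3" "perm3 i q1 q2" using perm3_exists[OF \<open>i < 3\<close>] by blast
  from all_square_submatrices_invertible_inverse2[OF AS p(1,2) q(1,2)]
  show "ring_unit (N i j)" using ring_unit_inverse_entry[OF p(3) q(3) inv] by blast
next
  fix r0 r1 c0 c1 :: nat assume "r0 < r1" "r1 < 3" "c0 < c1" "c1 < 3"
  then have P: "perm3 (3 - c0 - c1) c0 c1" and Q: "perm3 (3 - r0 - r1) r0 r1"
    by (blast intro: perm3_complement)+
  then have "ring_unit (M (3 - c0 - c1) (3 - r0 - r1))"
    using all_square_submatrices_invertible_unit[OF AS] unfolding perm3_def by blast
  then show "\<exists>e f g h. inverse2 (N r0 c0) (N r0 c1) (N r1 c0) (N r1 c1) e f g h"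
    using inverse2_inverse_block[OF P Q inv] by blast
next
  show "minvertible 3 N" using is_inverse_sym[OF inv] unfolding minvertible_def by blast
qed

lemma minvertible_2_iff_schur:
  fixes X :: "nat \<Rightarrow> nat \<Rightarrow> 'a::ring_1"
  assumes "ring_unit (X 1 1)"
  shows "minvertible 2 X \<longleftrightarrow> ring_unit (schur X 1 1 0 0)"
proof -
  have "minvertible 2 X \<longleftrightarrow> (\<exists>e f g h. inverse2 (X 1 1) (X 1 0) (X 0 1) (X 0 0) e f g h)"
    unfolding minvertible_2_iff by (blast dest: inverse2_swap)
  also have "\<dots> \<longleftrightarrow> ring_unit (schur X 1 1 0 0)"
    unfolding inverse2_iff_schur[OF assms] schur_def ..
  finally show ?thesis .
qed

lemma schur_sandwich:
  fixes L R :: "nat \<Rightarrow> 'a::ring_1" and Q :: "nat \<Rightarrow> nat \<Rightarrow> 'a"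
  assumes "ring_unit (L p)" "ring_unit (Q p q)" "ring_unit (R q)"
  shows "schur (\<lambda>a b. - (L a * Q a b * R b)) p q i j = - (L i * schur Q p q i j * R j)"
  unfolding schur_def ring_inv_minus_mult3[OF assms]
  by (simp add: algebra_simps ring_unit_inverse assms)

text \<open>Quasideterminants of the 2 x 2 submatrices containing M 2 2, at that entry; indexed
  transposed, like J2.\<close>
definition quasidets :: "(nat \<Rightarrow> nat \<Rightarrow> 'a::ring_1) \<Rightarrow> nat \<Rightarrow> nat \<Rightarrow> 'a" where
  "quasidets M i j = schur M j i 2 2"

lemma ring_unit_quasidets:
  fixes M :: "nat \<Rightarrow> nat \<Rightarrow> 'a::ring_1"
  assumes AS: "all_square_submatrices_invertible M" and "i < 2" "j < 2"
  shows "ring_unit (quasidets M i j)"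
proof -
  have "ring_unit (M j i)" using all_square_submatrices_invertible_unit[OF AS] assms by simp
  moreover have "\<exists>e f g h. inverse2 (M j i) (M j 2) (M 2 i) (M 2 2) e f g h"
    using all_square_submatrices_invertible_inverse2[OF AS, of j 2 i 2] assms by simp
  ultimately show ?thesis unfolding quasidets_def schur_def by (simp add: inverse2_iff_schur)
qed

lemma schur_J2:
  fixes M :: "nat \<Rightarrow> nat \<Rightarrow> 'a::ring_1"
  assumes U: "\<And>i j. i < 3 \<Longrightarrow> j < 3 \<Longrightarrow> ring_unit (M i j)" and "a < 3" "b < 3"
  shows "schur (J2 M) 2 2 a b = - (ring_inv (M 2 a) * quasidets M a b * ring_inv (M b 2))"
proof -
  have "ring_inv (ring_inv (M 2 2)) = M 2 2" using U by (simp add: ring_inv_ring_inv)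
  then show ?thesis
    unfolding schur_def J2_def quasidets_def using U assms
    by (simp add: algebra_simps ring_unit_inverse)
qed

lemma minvertible_J2_iff:
  fixes M :: "nat \<Rightarrow> nat \<Rightarrow> 'a::ring_1"
  assumes U: "\<And>i j. i < 3 \<Longrightarrow> j < 3 \<Longrightarrow> ring_unit (M i j)"
    and Q: "ring_unit (quasidets M 1 1)"
  shows "minvertible 3 (J2 M) \<longleftrightarrow> ring_unit (schur (quasidets M) 1 1 0 0)"
proof -
  define L where "L a = ring_inv (M 2 a)" for a
  define R where "R b = ring_inv (M b 2)" for b
  have LR: "ring_unit (L a)" "ring_unit (R a)" if "a < 3" for a
    unfolding L_def R_def using U that by (simp_all add: ring_unit_ring_inv)
  have "ring_unit (J2 M 2 2)" unfolding J2_def using U by (simp add: ring_unit_ring_inv)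
  then have "minvertible 3 (J2 M) \<longleftrightarrow> minvertible 2 (schur (J2 M) 2 2)"
    by (rule minvertible_3_iff_schur)
  also have "\<dots> \<longleftrightarrow> minvertible 2 (\<lambda>a b. - (L a * quasidets M a b * R b))"
    by (rule minvertible_cong) (simp add: schur_J2[OF U] L_def R_def)
  also have "\<dots> \<longleftrightarrow> ring_unit (schur (\<lambda>a b. - (L a * quasidets M a b * R b)) 1 1 0 0)"
    by (rule minvertible_2_iff_schur) (use LR[of 1] Q in \<open>simp add: ring_unit_minus_iff ring_unit_mult\<close>)
  also have "\<dots> \<longleftrightarrow> ring_unit (- (L 0 * schur (quasidets M) 1 1 0 0 * R 0))"
    by (subst schur_sandwich) (use LR[of 1] Q in simp_all)
  also have "\<dots> \<longleftrightarrow> ring_unit (schur (quasidets M) 1 1 0 0)"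
    using LR[of 0] by (simp add: ring_unit_minus_iff ring_unit_sandwich_iff)
  finally show ?thesis .
qed

lemma quasidets_inverse:
  fixes M N :: "nat \<Rightarrow> nat \<Rightarrow> 'a::ring_1"
  assumes AS: "all_square_submatrices_invertible M" and inv: "is_inverse 3 M N"
    and "i < 2" "j < 2"
  shows "quasidets N i j = ring_inv (quasidets M (1 - j) (1 - i))"
proof -
  have P: "perm3 (1 - i) i 2" and Q: "perm3 (1 - j) j 2"
    using assms(3,4) unfolding perm3_def by (auto simp: less_Suc_eq eval_nat_numeral)
  have "ring_unit (M (1 - i) (1 - j))"
    using all_square_submatrices_invertible_unit[OF AS] by simp
  with inverse2_inverse_block[OF P Q inv]
  have blk: "inverse2 (N j i) (N j 2) (N 2 i) (N 2 2)
      (schur M (1 - i) (1 - j) i j) (schur M (1 - i) (1 - j) i 2)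
      (schur M (1 - i) (1 - j) 2 j) (schur M (1 - i) (1 - j) 2 2)" by blast
  have "ring_unit (N j i)"
    using all_square_submatrices_invertible_unit[OF all_square_submatrices_invertible_inverse[OF AS inv]]
      assms(3,4) by simp
  from inverse2_schur[OF blk this] show ?thesis
    unfolding quasidets_def schur_def by (simp add: ring_inv_unique)
qed

lemma schur_reversed_inverses:
  fixes q00 q01 q10 q11 :: "'a::ring_1"
  assumes "ring_unit q01" "ring_unit q10"
  shows "ring_inv q11 - ring_inv q01 * q00 * ring_inv q10
       = - (ring_inv q01 * (q00 - q01 * ring_inv q11 * q10) * ring_inv q10)"
  by (simp add: algebra_simps ring_unit_inverse assms)

lemma minvertible_J2_inverse:
  fixes M N :: "nat \<Rightarrow> nat \<Rightarrow> 'a::ring_1"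
  assumes AS: "all_square_submatrices_invertible M" and J: "minvertible 3 (J2 M)"
    and inv: "is_inverse 3 M N"
  shows "minvertible 3 (J2 N)"
proof -
  have ASN: "all_square_submatrices_invertible N"
    using AS inv by (rule all_square_submatrices_invertible_inverse)
  have QM: "ring_unit (quasidets M i j)" if "i < 2" "j < 2" for i j
    using ring_unit_quasidets[OF AS that] .
  have "quasidets N 0 0 = ring_inv (quasidets M 1 1)" "quasidets N 0 1 = ring_inv (quasidets M 0 1)"
    "quasidets N 1 0 = ring_inv (quasidets M 1 0)" "quasidets N 1 1 = ring_inv (quasidets M 0 0)"
    using quasidets_inverse[OF AS inv] by simp_all
  moreover have "ring_inv (ring_inv (quasidets M 0 0)) = quasidets M 0 0"
    using QM by (simp add: ring_inv_ring_inv)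
  ultimately have "schur (quasidets N) 1 1 0 0
      = ring_inv (quasidets M 1 1) - ring_inv (quasidets M 0 1) * quasidets M 0 0 * ring_inv (quasidets M 1 0)"
    unfolding schur_def by simp
  also have "\<dots> = - (ring_inv (quasidets M 0 1) * schur (quasidets M) 1 1 0 0 * ring_inv (quasidets M 1 0))"
    unfolding schur_def by (rule schur_reversed_inverses) (use QM in simp_all)
  finally have critN: "schur (quasidets N) 1 1 0 0
      = - (ring_inv (quasidets M 0 1) * schur (quasidets M) 1 1 0 0 * ring_inv (quasidets M 1 0))" .
  have "ring_unit (quasidets M 1 1)" "ring_unit (quasidets N 1 1)"
    using ring_unit_quasidets[OF AS] ring_unit_quasidets[OF ASN] by simp_all
  note J2_iff = minvertible_J2_iff[OF all_square_submatrices_invertible_unit[OF AS] this(1)]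
    minvertible_J2_iff[OF all_square_submatrices_invertible_unit[OF ASN] this(2)]
  have "ring_unit (schur (quasidets M) 1 1 0 0)" using J J2_iff(1) by blast
  then have "ring_unit (schur (quasidets N) 1 1 0 0)"
    unfolding critN ring_unit_minus_iff by (intro ring_unit_mult ring_unit_ring_inv) (use QM in simp_all)
  then show ?thesis using J2_iff(2) by blast
qed

theorem lemma11:
  fixes M N :: "nat \<Rightarrow> nat \<Rightarrow> 'a::ring_1"
  assumes "inS M"
    and "is_inverse 3 M N"
  shows "inS N"
  using assms all_square_submatrices_invertible_inverse minvertible_J2_inverse
  unfolding inS_def by blast

end
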